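(* (Church-Rosser) For all terms $e, e_1, e_2$: if $e \to\!\!\to e_1$ and $e \to\!\!\to e_2$, then there exists a term $e'$ such that $e_1 \to\!\!\to e'$ and $e_2 \to\!\!\to e'$.
   Context: Terms: $e ::= x \mid \lambda x.e \mid e\,e$ (modulo $\alpha$-equivalence, Barendregt's variable convention). Values: $v ::= \lambda x.e$. A context is a term with one hole $[\,]$; $C[e]$ is plugging, $C_1[C_2]$ composition. Answer contexts: $A ::= [\,] \mid A[\lambda x.A]\,e$. Outer partial answer contexts: $A^{\uparrow} ::= [\,] \mid A[A^{\uparrow}]\,e$. Inner partial answer contexts: $A^{\downarrow} ::= [\,] \mid A[\lambda x.A^{\downarrow}]$. Evaluation contexts: $E ::= [\,] \mid E\,e \mid A[E] \mid A^{\uparrow}[A[\lambda x.A^{\downarrow}[E[x]]]\,E]$, where in the last production $A^{\uparrow}[A^{\downarrow}]$ must be an answer context. Axiom $\beta_{need}$: $A^{\uparrow}[A_1[\lambda x.A^{\downarrow}[E[x]]]\,A_2[v]] \;\beta_{need}\; A^{\uparrow}[A_1[A_2[(A^{\downarrow}[E[x]])\{x:=v\}]]]$ provided $A^{\uparrow}[A^{\downarrow}]$ is an answer context ($\{x:=v\}$ capture-avoiding substitution for all free occurrences of $x$). $\to$ is the compatible closure of $\beta_{need}$ (closure under contexts $C ::= [\,] \mid \lambda x.C \mid C\,e \mid e\,C$) and $\to\!\!\to$ its reflexive–transitive closure. *)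

theory Defs
  imports Main
begin

text \<open>Lambda terms modulo alpha-equivalence, represented with de Bruijn indices.\<close>
datatype trm = Var nat | Lam trm | App trm trm

fun shift :: "nat \<Rightarrow> nat \<Rightarrow> trm \<Rightarrow> trm" where
  "shift d c (Var i) = Var (if c \<le> i then i + d else i)"
| "shift d c (Lam t) = Lam (shift d (Suc c) t)"
| "shift d c (App t s) = App (shift d c t) (shift d c s)"

fun subst :: "trm \<Rightarrow> nat \<Rightarrow> trm \<Rightarrow> trm" where
  "subst (Var i) k u = (if i = k then u else if k < i then Var (i - 1) else Var i)"
| "subst (Lam t) k u = Lam (subst t (Suc k) (shift 1 0 u))"
| "subst (App t s) k u = App (subst t k u) (subst s k u)"

datatype ctx = Hole | CLam ctx | CAppL ctx trm | CAppR trm ctx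

fun plug :: "ctx \<Rightarrow> trm \<Rightarrow> trm" where
  "plug Hole e = e"
| "plug (CLam C) e = Lam (plug C e)"
| "plug (CAppL C t) e = App (plug C e) t"
| "plug (CAppR t C) e = App t (plug C e)"

fun compose :: "ctx \<Rightarrow> ctx \<Rightarrow> ctx" where
  "compose Hole D = D"
| "compose (CLam C) D = CLam (compose C D)"
| "compose (CAppL C t) D = CAppL (compose C D) t"
| "compose (CAppR t C) D = CAppR t (compose C D)"

fun nb :: "ctx \<Rightarrow> nat" where
  "nb Hole = 0"
| "nb (CLam C) = Suc (nb C)"
| "nb (CAppL C t) = nb C"
| "nb (CAppR t C) = nb C"

fun cshift :: "nat \<Rightarrow> nat \<Rightarrow> ctx \<Rightarrow> ctx" where
  "cshift d c Hole = Hole"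
| "cshift d c (CLam C) = CLam (cshift d (Suc c) C)"
| "cshift d c (CAppL C t) = CAppL (cshift d c C) (shift d c t)"
| "cshift d c (CAppR t C) = CAppR (shift d c t) (cshift d c C)"

text \<open>Answer contexts  A ::= [] | A[\<lambda>x.A] e\<close>
inductive ans :: "ctx \<Rightarrow> bool" where
  "ans Hole"
| "ans A1 \<Longrightarrow> ans A2 \<Longrightarrow> ans (CAppL (compose A1 (CLam A2)) e)"

text \<open>Outer partial answer contexts  A\<up> ::= [] | A[A\<up>] e\<close>
inductive outer :: "ctx \<Rightarrow> bool" where
  "outer Hole"
| "ans A \<Longrightarrow> outer Au \<Longrightarrow> outer (CAppL (compose A Au) e)"

text \<open>Inner partial answer contexts  A\<down> ::= [] | A[\<lambda>x.A\<down>]\<close>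
inductive inner :: "ctx \<Rightarrow> bool" where
  "inner Hole"
| "ans A \<Longrightarrow> inner Ad \<Longrightarrow> inner (compose A (CLam Ad))"

text \<open>Evaluation contexts. In the last rule the variable x bound by the displayed
  lambda is the de Bruijn index nb Ad + nb E1 at the position of the hole of E1.\<close>
inductive ectx :: "ctx \<Rightarrow> bool" where
  "ectx Hole"
| "ectx E \<Longrightarrow> ectx (CAppL E e)"
| "ans A \<Longrightarrow> ectx E \<Longrightarrow> ectx (compose A E)"
| "outer Au \<Longrightarrow> ans A \<Longrightarrow> inner Ad \<Longrightarrow> ectx E1 \<Longrightarrow> ectx E2 \<Longrightarrow>
   ans (compose Au Ad) \<Longrightarrow>
   ectx (compose Au (CAppR (plug A (Lam (plug Ad (plug E1 (Var (nb Ad + nb E1)))))) E2))"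

text \<open>LHS: A\<up>[A1[\<lambda>x.A\<down>[E[x]]] A2[v]] with v = \<lambda>.b.
  RHS: A\<up>[A1[A2[(A\<down>[E[x]]){x:=v}]]], where (de Bruijn bookkeeping) A2 and v are
  lifted past the binders of A1, and the body is lifted past the binders of A2.\<close>
inductive beta_need :: "trm \<Rightarrow> trm \<Rightarrow> bool" where
  "outer Au \<Longrightarrow> ans A1 \<Longrightarrow> inner Ad \<Longrightarrow> ectx E \<Longrightarrow> ans A2 \<Longrightarrow>
   ans (compose Au Ad) \<Longrightarrow>
   beta_need
     (plug Au (App (plug A1 (Lam (plug Ad (plug E (Var (nb Ad + nb E))))))
                   (plug A2 (Lam b))))
     (plug Au (plug A1 (plug (cshift (nb A1) 0 A2)
        (subst (shift (nb A2) 1 (plug Ad (plug E (Var (nb Ad + nb E)))))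
               0 (shift (nb A1) (nb A2) (Lam b))))))"

inductive step :: "trm \<Rightarrow> trm \<Rightarrow> bool" where
  "beta_need e e' \<Longrightarrow> step e e'"
| "step e e' \<Longrightarrow> step (Lam e) (Lam e')"
| "step e e' \<Longrightarrow> step (App e t) (App e' t)"
| "step e e' \<Longrightarrow> step (App t e) (App t e')"

definition mstep :: "trm \<Rightarrow> trm \<Rightarrow> bool" where
  "mstep = step\<^sup>*\<^sup>*"

end

theory Submission
  imports Defs "HOL-Library.Confluence"
begin

text \<open>Takahashi's method. Whether a redex \<open>A\<^sub>1[\<lambda>x.N] A\<^sub>2[v]\<close> may be contracted
  depends on its surroundings: \<open>x\<close> must occur in evaluation position in \<open>N\<close>, and the enclosing
  context must supply the arguments consumed by the partial answer contexts \<open>A\<^sup>\<up>\<close> and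
  \<open>A\<^sup>\<down>\<close>. Both conditions are captured by a syntax-directed relation \<open>needs a c t i\<close>,
  equivalent to the decompositions \<open>A\<^sup>\<up>[A\<^sup>\<down>[E[x]]]\<close> of the calculus. Parallel reduction
  \<open>par K\<close>, indexed by the number \<open>K\<close> of pending arguments, contracts any set of redexes whose
  bodies need their variable within that budget. Then \<open>\<rightarrow> \<subseteq> par 0 \<subseteq> \<rightarrow>\<rightarrow>\<close>, and \<open>par K t t'\<close>
  implies \<open>par K t' t\<^sup>*\<close> for the complete development \<open>t\<^sup>*\<close> of \<open>t\<close>. So \<open>par 0\<close> has the
  diamond property, and \<open>\<rightarrow>\<rightarrow> = (par 0)\<^sup>*\<close> is confluent.\<close>

section \<open>De Bruijn indices and contexts\<close>

lemma shift_0 [simp]: "shift 0 c t = t"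
  by (induction t arbitrary: c) auto

lemma shift_shift_comm: "c \<le> c' \<Longrightarrow> shift d c (shift d' c' t) = shift d' (c' + d) (shift d c t)"
  by (induction t arbitrary: c c') auto

lemma shift_shift_add: "c \<le> c' \<Longrightarrow> c' \<le> c + d \<Longrightarrow> shift d' c' (shift d c t) = shift (d + d') c t"
  by (induction t arbitrary: c c') auto

lemma shift_shift_0 [simp]: "shift d' 0 (shift d 0 t) = shift (d + d') 0 t"
  by (rule shift_shift_add) simp_all

lemma subst_shift_cancel: "c \<le> k \<Longrightarrow> k < c + d \<Longrightarrow> subst (shift d c t) k u = shift (d - 1) c t"
  by (induction t arbitrary: c k u) auto

lemma shift_subst_lt: "k \<le> c \<Longrightarrow> shift d c (subst t k u) = subst (shift d (Suc c) t) k (shift d c u)"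
proof (induction t arbitrary: c k u)
  case (Lam t)
  have "shift d (Suc c) (shift 1 0 u) = shift 1 0 (shift d c u)"
    using shift_shift_comm[of 0 c 1 d u] by simp
  with Lam show ?case by auto
qed auto

lemma shift_subst_ge: "c \<le> k \<Longrightarrow> shift d c (subst t k u) = subst (shift d c t) (k + d) (shift d c u)"
proof (induction t arbitrary: c k u)
  case (Lam t)
  have "shift d (Suc c) (shift 1 0 u) = shift 1 0 (shift d c u)"
    using shift_shift_comm[of 0 c 1 d u] by simp
  with Lam show ?case by auto
qed auto

lemma subst_subst:
  "i \<le> j \<Longrightarrow> subst (subst t i u) j v = subst (subst t (Suc j) (shift 1 i v)) i (subst u j v)"
proof (induction t arbitrary: i j u v)
  case (Var n)
  then show ?case
    by (auto simp: subst_shift_cancel[where d=1, simplified])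
next
  case (Lam t)
  have "shift 1 0 (subst u j v) = subst (shift 1 0 u) (Suc j) (shift 1 0 v)"
    using shift_subst_ge[of 0 j 1 u v] by simp
  moreover have "shift 1 0 (shift 1 i v) = shift 1 (Suc i) (shift 1 0 v)"
    using shift_shift_comm[of 0 i 1 1 v] by simp
  ultimately show ?case using Lam(1)[of "Suc i" "Suc j" "shift 1 0 u" "shift 1 0 v"] Lam(2) by simp
qed auto

fun csubst :: "ctx \<Rightarrow> nat \<Rightarrow> trm \<Rightarrow> ctx" where
  "csubst Hole k u = Hole"
| "csubst (CLam C) k u = CLam (csubst C (Suc k) (shift 1 0 u))"
| "csubst (CAppL C t) k u = CAppL (csubst C k u) (subst t k u)"
| "csubst (CAppR t C) k u = CAppR (subst t k u) (csubst C k u)"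

lemma plug_compose [simp]: "plug (compose C D) t = plug C (plug D t)"
  by (induction C) auto

lemma compose_assoc [simp]: "compose (compose C D) E = compose C (compose D E)"
  by (induction C) auto

lemma compose_Hole [simp]: "compose C Hole = C"
  by (induction C) auto

lemma nb_compose [simp]: "nb (compose C D) = nb C + nb D"
  by (induction C) auto

lemma nb_cshift [simp]: "nb (cshift d c C) = nb C"
  by (induction C arbitrary: c) auto

lemma nb_csubst [simp]: "nb (csubst C k u) = nb C"
  by (induction C arbitrary: k u) auto

lemma size_plug: "size t \<le> size (plug C t)"
  by (induction C) auto

lemma shift_plug: "shift d c (plug C t) = plug (cshift d c C) (shift d (c + nb C) t)"
  by (induction C arbitrary: c) auto

lemma subst_plug:
  "subst (plug C t) k u = plug (csubst C k u) (subst t (k + nb C) (shift (nb C) 0 u))"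
  by (induction C arbitrary: k u) auto

lemma cshift_cshift_comm: "c \<le> c' \<Longrightarrow> cshift d c (cshift d' c' C) = cshift d' (c' + d) (cshift d c C)"
  by (induction C arbitrary: c c') (auto simp: shift_shift_comm)

lemma csubst_cshift:
  "j \<le> k \<Longrightarrow> csubst (cshift n j C) (k + n) (shift n j u) = cshift n j (csubst C k u)"
proof (induction C arbitrary: j k u)
  case (CLam C)
  have "shift 1 0 (shift n j u) = shift n (Suc j) (shift 1 0 u)"
    using shift_shift_comm[of 0 j 1 n u] by simp
  with CLam.IH[of "Suc j" "Suc k" "shift 1 0 u"] CLam.prems show ?case by auto
qed (auto simp: shift_subst_ge)

section \<open>Answer contexts\<close>

lemma ans_compose: "ans A \<Longrightarrow> ans B \<Longrightarrow> ans (compose A B)"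
proof (induction rule: ans.induct)
  case (2 A1 A2 e)
  then show ?case using ans.intros(2)[of A1 "compose A2 B" e] by simp
qed simp

text \<open>The grade counts the applications of \<open>A\<^sup>\<up>\<close> (the abstractions of \<open>A\<^sup>\<down>\<close>) that are
  left unmatched.\<close>

inductive outer_deg :: "nat \<Rightarrow> ctx \<Rightarrow> bool" where
  outer_deg_Hole: "outer_deg 0 Hole"
| outer_deg_App: "ans A \<Longrightarrow> outer_deg k P \<Longrightarrow> outer_deg (Suc k) (CAppL (compose A P) e)"

inductive inner_deg :: "nat \<Rightarrow> ctx \<Rightarrow> bool" where
  inner_deg_Hole: "inner_deg 0 Hole"
| inner_deg_Lam: "ans A \<Longrightarrow> inner_deg m D \<Longrightarrow> inner_deg (Suc m) (compose A (CLam D))"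

lemma outer_iff_outer_deg: "outer P \<longleftrightarrow> (\<exists>k. outer_deg k P)"
proof
  assume "outer P"
  then show "\<exists>k. outer_deg k P"
    by (induction rule: outer.induct) (auto intro: outer_deg.intros)
next
  assume "\<exists>k. outer_deg k P"
  then obtain k where "outer_deg k P" ..
  then show "outer P"
    by (induction rule: outer_deg.induct) (auto intro: outer.intros)
qed

lemma inner_iff_inner_deg: "inner D \<longleftrightarrow> (\<exists>m. inner_deg m D)"
proof
  assume "inner D"
  then show "\<exists>m. inner_deg m D"
    by (induction rule: inner.induct) (auto intro: inner_deg.intros)
next
  assume "\<exists>m. inner_deg m D"
  then obtain m where "inner_deg m D" ..
  then show "inner D"
    by (induction rule: inner_deg.induct) (auto intro: inner.intros)
qed

lemma outer_deg_0: "outer_deg 0 P \<longleftrightarrow> P = Hole"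
  by (auto elim: outer_deg.cases intro: outer_deg_Hole)

lemma inner_deg_0: "inner_deg 0 D \<longleftrightarrow> D = Hole"
  by (auto elim: inner_deg.cases intro: inner_deg_Hole)

fun balance :: "ctx \<Rightarrow> int" where
  "balance Hole = 0"
| "balance (CLam C) = balance C - 1"
| "balance (CAppL C t) = balance C + 1"
| "balance (CAppR t C) = balance C"

lemma balance_compose [simp]: "balance (compose C D) = balance C + balance D"
  by (induction C) auto

lemma ans_balance: "ans A \<Longrightarrow> balance A = 0"
  by (induction rule: ans.induct) auto

lemma outer_deg_balance: "outer_deg k P \<Longrightarrow> balance P = int k"
  by (induction rule: outer_deg.induct) (auto simp: ans_balance)

lemma inner_deg_balance: "inner_deg m D \<Longrightarrow> balance D = - int m"
  by (induction rule: inner_deg.induct) (auto simp: ans_balance)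

lemma outer_deg_snoc: "outer_deg k P \<Longrightarrow> outer_deg (Suc k) (compose P (CAppL Hole e))"
proof (induction rule: outer_deg.induct)
  case outer_deg_Hole
  have "outer_deg (Suc 0) (CAppL (compose Hole Hole) e)"
    by (intro outer_deg.intros ans.intros)
  then show ?case by simp
next
  case (outer_deg_App A k P e')
  then show ?case using outer_deg.outer_deg_App[of A "Suc k" "compose P (CAppL Hole e)" e'] by simp
qed

lemma inner_deg_snoc:
  "inner_deg (Suc m) D \<Longrightarrow> \<exists>D0 A. D = compose D0 (compose A (CLam Hole)) \<and> inner_deg m D0 \<and> ans A"
proof (induction m arbitrary: D)
  case 0
  then show ?case by (auto elim!: inner_deg.cases simp: inner_deg_0 intro: inner_deg_Hole)
next
  case (Suc m)
  then obtain A D' where D: "D = compose A (CLam D')" "ans A" "inner_deg (Suc m) D'"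
    by (auto elim: inner_deg.cases)
  with Suc.IH obtain D0 A2
    where D': "D' = compose D0 (compose A2 (CLam Hole))" "inner_deg m D0" "ans A2"
    by blast
  have "D = compose (compose A (CLam D0)) (compose A2 (CLam Hole))" using D D' by simp
  moreover have "inner_deg (Suc m) (compose A (CLam D0))" using D(2) D'(2) by (rule inner_deg_Lam)
  ultimately show ?case using D'(3) by blast
qed

text \<open>Closing the hole of an outer context of grade \<open>k + 1\<close> by an abstraction consumes one of
  its open applications.\<close>

lemma outer_deg_close:
  "outer_deg (Suc k) P \<Longrightarrow> \<exists>R Q. ans R \<and> compose P (CLam Hole) = compose R Q \<and> outer_deg k Q"
proof (induction k arbitrary: P)
  case 0
  then obtain A e where "P = CAppL A e" "ans A"
    by (auto elim: outer_deg.cases simp: outer_deg_0)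
  then have "ans (compose P (CLam Hole))" by (auto intro: ans.intros)
  then show ?case by (metis compose_Hole outer_deg_Hole)
next
  case (Suc k)
  then obtain A P' e where P: "P = CAppL (compose A P') e" "ans A" "outer_deg (Suc k) P'"
    by (auto elim: outer_deg.cases)
  with Suc.IH obtain R Q where RQ: "ans R" "compose P' (CLam Hole) = compose R Q" "outer_deg k Q"
    by blast
  have "compose P (CLam Hole) = compose Hole (CAppL (compose (compose A R) Q) e)"
    using P RQ by simp
  moreover have "outer_deg (Suc k) (CAppL (compose (compose A R) Q) e)"
    using ans_compose[OF P(2) RQ(1)] RQ(3) by (rule outer_deg_App)
  ultimately show ?case using ans.intros(1) by blast
qed

lemma outer_deg_split:
  "outer_deg k P \<Longrightarrow> m \<le> k \<Longrightarrow> \<exists>P1 P2 l. P = compose P1 P2 \<and> outer_deg l P1 \<and> outer_deg m P2"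
proof (induction arbitrary: m rule: outer_deg.induct)
  case outer_deg_Hole
  then show ?case using outer_deg.outer_deg_Hole by (metis compose_Hole le_0_eq)
next
  case (outer_deg_App A k P e)
  show ?case
  proof (cases "m = Suc k")
    case True
    then show ?thesis
      using outer_deg.outer_deg_App[OF outer_deg_App(1,2)] outer_deg.outer_deg_Hole
      by (metis compose.simps(1))
  next
    case False
    with outer_deg_App.prems have "m \<le> k" by simp
    with outer_deg_App.IH obtain P1 P2 l
      where H: "P = compose P1 P2" "outer_deg l P1" "outer_deg m P2" by blast
    have "CAppL (compose A P) e = compose (CAppL (compose A P1) e) P2" using H by simp
    then show ?thesis using outer_deg.outer_deg_App[OF outer_deg_App(1) H(2)] H(3) by blast
  qed
qed

lemma outer_deg_inner_deg_ans: "outer_deg m P \<Longrightarrow> inner_deg m D \<Longrightarrow> ans (compose P D)"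
proof (induction arbitrary: D rule: outer_deg.induct)
  case outer_deg_Hole
  then show ?case by (simp add: inner_deg_0 ans.intros(1))
next
  case (outer_deg_App A k P e)
  from inner_deg_snoc[OF outer_deg_App.prems] obtain D0 A2
    where D: "D = compose D0 (compose A2 (CLam Hole))" "inner_deg k D0" "ans A2" by blast
  have "ans (compose A (compose P (compose D0 A2)))"
    using outer_deg_App D by (metis ans_compose compose_assoc)
  then have "ans (CAppL (compose (compose A (compose P (compose D0 A2))) (CLam Hole)) e)"
    using ans.intros by blast
  then show ?case using D by simp
qed

lemma ans_compose_outer_inner_iff:
  assumes "outer_deg k P" "inner_deg m D"
  shows "ans (compose P D) \<longleftrightarrow> k = m"
  using outer_deg_inner_deg_ans ans_balance outer_deg_balance inner_deg_balance assms by fastforce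

lemma inner_deg_prefix: "ans B \<Longrightarrow> inner_deg (Suc m) D \<Longrightarrow> inner_deg (Suc m) (compose B D)"
proof -
  assume B: "ans B" and "inner_deg (Suc m) D"
  then obtain A D' where "D = compose A (CLam D')" "ans A" "inner_deg m D'"
    by (auto elim: inner_deg.cases)
  then show ?thesis using inner_deg_Lam[OF ans_compose[OF B \<open>ans A\<close>]] by simp
qed

lemma outer_deg_ectx_compose: "outer_deg k P \<Longrightarrow> ectx E \<Longrightarrow> ectx (compose P E)"
  by (induction rule: outer_deg.induct) (auto intro: ectx.intros(2,3))

section \<open>Spines\<close>

text \<open>\<open>spine n W\<close>: the hole of \<open>W\<close> lies on the left spine of abstractions and applied
  functions, and \<open>n\<close> abstractions on the path to it are not matched by an application further
  out. The contexts \<open>spine 0\<close> are exactly the answer contexts.\<close>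

inductive spine :: "nat \<Rightarrow> ctx \<Rightarrow> bool" where
  spine_Hole: "spine 0 Hole"
| spine_CLam: "spine n W \<Longrightarrow> spine (Suc n) (CLam W)"
| spine_CAppL: "spine (Suc n) W \<Longrightarrow> spine n (CAppL W e)"

inductive spine_lam :: "nat \<Rightarrow> trm \<Rightarrow> trm \<Rightarrow> bool" where
  spine_lam_here: "spine_lam 0 (Lam M) M"
| spine_lam_Lam: "spine_lam n b M \<Longrightarrow> spine_lam (Suc n) (Lam b) M"
| spine_lam_App: "spine_lam (Suc n) f M \<Longrightarrow> spine_lam n (App f e) M"

inductive_cases spine_lam_LamE: "spine_lam n (Lam b) M"
inductive_cases spine_lam_AppE: "spine_lam n (App f e) M"
inductive_cases spine_lam_VarE: "spine_lam n (Var i) M"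

lemma spine_lam_iff: "spine_lam n t M \<longleftrightarrow> (\<exists>W. spine n W \<and> t = plug W (Lam M))"
proof
  assume "spine_lam n t M"
  then show "\<exists>W. spine n W \<and> t = plug W (Lam M)"
  proof (induction rule: spine_lam.induct)
    case (spine_lam_here M)
    then show ?case using spine_Hole by force
  next
    case (spine_lam_Lam n b M)
    then show ?case using spine_CLam by force
  next
    case (spine_lam_App n f M e)
    then show ?case using spine_CAppL by force
  qed
next
  assume "\<exists>W. spine n W \<and> t = plug W (Lam M)"
  then obtain W where "spine n W" "t = plug W (Lam M)" by blast
  then show "spine_lam n t M"
    by (induction arbitrary: t rule: spine.induct) (auto intro: spine_lam.intros)
qed

lemma spine_lam_size: "spine_lam n t M \<Longrightarrow> size M < size t"
  by (induction rule: spine_lam.induct) auto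

lemma spine_lam_split: "spine_lam p f M2 \<Longrightarrow> spine_lam (p + n + 1) f M \<Longrightarrow> spine_lam n M2 M"
proof (induction f arbitrary: p n M M2)
  case (Var x)
  then show ?case by (auto elim: spine_lam_VarE)
next
  case (Lam b)
  show ?case
  proof (cases p)
    case 0
    with Lam.prems have "M2 = b" "spine_lam n b M" by (auto elim: spine_lam_LamE)
    then show ?thesis by simp
  next
    case (Suc p')
    with Lam.prems have "spine_lam p' b M2" "spine_lam (p' + n + 1) b M"
      by (auto elim: spine_lam_LamE)
    then show ?thesis using Lam.IH by blast
  qed
next
  case (App f e)
  from App.prems have "spine_lam (Suc p) f M2" "spine_lam (Suc p + n + 1) f M"
    by (auto elim: spine_lam_AppE)
  then show ?case using App.IH by blast
qed

lemma spine_compose: "spine n W \<Longrightarrow> spine m V \<Longrightarrow> spine (n + m) (compose W V)"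
  by (induction rule: spine.induct) (auto intro: spine.intros)

lemma ans_spine: "ans A \<Longrightarrow> spine 0 A"
proof (induction rule: ans.induct)
  case (2 A1 A2 e)
  then have "spine (0 + Suc 0) (compose A1 (CLam A2))" by (intro spine_compose spine_CLam)
  then show ?case by (simp add: spine_CAppL)
qed (rule spine_Hole)

lemma spine_decomp: "spine n W \<Longrightarrow> \<exists>D A. W = compose D A \<and> inner_deg n D \<and> ans A"
proof (induction rule: spine.induct)
  case spine_Hole
  then show ?case by (metis compose.simps(1) ans.intros(1) inner_deg_Hole)
next
  case (spine_CLam n W)
  then obtain D A where "W = compose D A" "inner_deg n D" "ans A" by blast
  moreover have "inner_deg (Suc n) (compose Hole (CLam D))"
    using \<open>inner_deg n D\<close> by (intro inner_deg_Lam ans.intros)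
  ultimately show ?case by (metis compose.simps(1,2))
next
  case (spine_CAppL n W e)
  then obtain D A where W: "W = compose D A" "inner_deg (Suc n) D" "ans A" by blast
  then obtain A1 D1 where D: "D = compose A1 (CLam D1)" "ans A1" "inner_deg n D1"
    by (auto elim: inner_deg.cases)
  show ?case
  proof (cases n)
    case 0
    with D have "ans (CAppL (compose A1 (CLam Hole)) e)" by (auto intro: ans.intros)
    then have "ans (CAppL W e)"
      using W D 0 ans_compose[of "CAppL (compose A1 (CLam Hole)) e" A] by (simp add: inner_deg_0)
    then show ?thesis using 0 by (metis compose.simps(1) inner_deg_Hole)
  next
    case (Suc n')
    with D obtain A2 D2 where D1: "D1 = compose A2 (CLam D2)" "ans A2" "inner_deg n' D2"
      by (auto elim: inner_deg.cases)
    have "CAppL W e = compose (compose (CAppL (compose A1 (CLam A2)) e) (CLam D2)) A"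
      using W D D1 by simp
    moreover have "inner_deg n (compose (CAppL (compose A1 (CLam A2)) e) (CLam D2))"
      unfolding Suc using D(2) D1(2,3) by (intro inner_deg_Lam ans.intros)
    ultimately show ?thesis using W(3) by blast
  qed
qed

lemma spine_0_iff_ans: "spine 0 W \<longleftrightarrow> ans W"
  using spine_decomp[of 0 W] ans_spine by (auto simp: inner_deg_0)

lemma spine_lam_0_iff: "spine_lam 0 f M \<longleftrightarrow> (\<exists>A. ans A \<and> f = plug A (Lam M))"
  by (simp add: spine_lam_iff spine_0_iff_ans)

lemma spine_cshift: "spine n W \<Longrightarrow> spine n (cshift d k W)"
  by (induction arbitrary: k rule: spine.induct) (auto intro: spine.intros)

lemma spine_csubst: "spine n W \<Longrightarrow> spine n (csubst W k u)"
  by (induction arbitrary: k u rule: spine.induct) (auto intro: spine.intros)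

lemma ans_cshift: "ans A \<Longrightarrow> ans (cshift d k A)"
  using spine_cshift spine_0_iff_ans by blast

lemma ans_csubst: "ans A \<Longrightarrow> ans (csubst A k u)"
  using spine_csubst spine_0_iff_ans by blast

lemma spine_lam_shift: "spine_lam n t M \<Longrightarrow> \<exists>k'. k < k' \<and> spine_lam n (shift d k t) (shift d k' M)"
proof -
  assume "spine_lam n t M"
  then obtain W where W: "spine n W" "t = plug W (Lam M)" by (auto simp: spine_lam_iff)
  then have "spine_lam n (shift d k t) (shift d (Suc (k + nb W)) M)"
    using spine_cshift[OF W(1)] by (auto simp: spine_lam_iff shift_plug)
  then show ?thesis by (intro exI[of _ "Suc (k + nb W)"]) simp
qed

lemma spine_lam_subst:
  "spine_lam n t M \<Longrightarrow> \<exists>k' u'. k < k' \<and> spine_lam n (subst t k u) (subst M k' u')"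
proof -
  assume "spine_lam n t M"
  then obtain W where W: "spine n W" "t = plug W (Lam M)" by (auto simp: spine_lam_iff)
  then have "spine_lam n (subst t k u) (subst M (Suc (k + nb W)) (shift (Suc (nb W)) 0 u))"
    using spine_csubst[OF W(1)] by (auto simp: spine_lam_iff subst_plug)
  then show ?thesis by (intro exI[of _ "Suc (k + nb W)"]) auto
qed

lemma spine_plug_inj:
  "spine n A \<Longrightarrow> spine n B \<Longrightarrow> plug A (Lam M) = plug B (Lam M') \<Longrightarrow> A = B \<and> M = M'"
proof (induction arbitrary: B rule: spine.induct)
  case spine_Hole
  then show ?case by (cases B) (auto elim: spine.cases)
next
  case (spine_CLam n A)
  then show ?case by (cases B) (auto elim: spine.cases)
next
  case (spine_CAppL n A e)
  then show ?case by (cases B) (auto elim: spine.cases)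
qed

section \<open>Needed variables\<close>

text \<open>\<open>needs a c t i\<close>: evaluating \<open>t\<close> under \<open>c\<close> pending arguments demands the variable with
  index \<open>i\<close>, passing under at most \<open>a\<close> abstractions that receive no argument
  (\<open>ectx_needs\<close>, \<open>needs_imp_ectx\<close>).\<close>

inductive needs :: "nat \<Rightarrow> nat \<Rightarrow> trm \<Rightarrow> nat \<Rightarrow> bool" where
  needs_Var: "needs a c (Var i) i"
| needs_fun: "needs a (Suc c) f i \<Longrightarrow> needs a c (App f e) i"
| needs_Lam_arg: "needs a c b (Suc i) \<Longrightarrow> needs a (Suc c) (Lam b) i"
| needs_Lam_open: "needs a 0 b (Suc i) \<Longrightarrow> needs (Suc a) 0 (Lam b) i"
| needs_arg: "spine_lam 0 f M \<Longrightarrow> needs c 0 M 0 \<Longrightarrow> needs 0 0 e i \<Longrightarrow> needs a c (App f e) i"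

inductive_cases needs_VarE: "needs a c (Var k) i"
inductive_cases needs_LamE: "needs a c (Lam b) i"
inductive_cases needs_AppE: "needs a c (App f e) i"

lemma needs_App_cases:
  "needs a c (App f e) i \<Longrightarrow>
   needs a (Suc c) f i \<or> (\<exists>M. spine_lam 0 f M \<and> needs c 0 M 0 \<and> needs 0 0 e i)"
  by (auto elim: needs_AppE)

lemma needs_mono: "needs a c t i \<Longrightarrow> a \<le> a' \<Longrightarrow> c \<le> c' \<Longrightarrow> needs a' c' t i"
proof (induction arbitrary: a' c' rule: needs.induct)
  case (needs_Lam_arg a c b i)
  then obtain c0 where "c' = Suc c0" "c \<le> c0" by (cases c') auto
  with needs_Lam_arg show ?case by (auto intro: needs.intros)
next
  case (needs_Lam_open a b i)
  show ?case
  proof (cases c')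
    case 0
    with needs_Lam_open obtain a0 where "a' = Suc a0" "a \<le> a0" by (cases a') auto
    with needs_Lam_open 0 show ?thesis by (auto intro: needs.intros)
  next
    case (Suc c0)
    with needs_Lam_open show ?thesis by (auto intro: needs.intros)
  qed
qed (auto intro: needs.intros)

lemma spine_lam_not_needs: "spine_lam n t M \<Longrightarrow> a + c \<le> n \<Longrightarrow> \<not> needs a c t i"
proof (induction "size t" arbitrary: t n M a c i rule: less_induct)
  case less
  show ?case
  proof
    assume "needs a c t i"
    then show False
    proof (cases rule: needs.cases)
      case needs_Var
      then show ?thesis using less.prems by (auto elim: spine_lam_VarE)
    next
      case (needs_fun f e)
      with less.prems(1) have "spine_lam (Suc n) f M" by (auto elim: spine_lam_AppE)
      then show ?thesis using less.hyps[of f "Suc n" M a "Suc c" i] needs_fun less.prems(2) by simp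
    next
      case (needs_Lam_arg c' b)
      with less.prems obtain n' where "n = Suc n'" "spine_lam n' b M" by (auto elim: spine_lam_LamE)
      then show ?thesis using less.hyps[of b n' M a c' "Suc i"] needs_Lam_arg less.prems(2) by simp
    next
      case (needs_Lam_open a' b)
      with less.prems obtain n' where "n = Suc n'" "spine_lam n' b M" by (auto elim: spine_lam_LamE)
      then show ?thesis using less.hyps[of b n' M a' 0 "Suc i"] needs_Lam_open less.prems(2) by simp
    next
      case (needs_arg f M' e)
      with less.prems(1) have "spine_lam (Suc n) f M" by (auto elim: spine_lam_AppE)
      then have "spine_lam n M' M" using spine_lam_split[OF needs_arg(2), of n M] by simp
      moreover have "size M' < size t" using spine_lam_size[OF needs_arg(2)] needs_arg(1) by simp
      ultimately show ?thesis using less.hyps[of M' n M c 0 0] needs_arg less.prems by auto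
    qed
  qed
qed

lemma needs_spine_body_conflict:
  assumes "needs a c t j" "spine_lam n t M" "needs c0 0 M 0"
    and M_unique: "\<And>a' c' k. needs a' c' M k \<Longrightarrow> k = 0"
  shows False
  using assms(1-3)
proof (induction arbitrary: n rule: needs.induct)
  case (needs_Var a c i)
  then show ?case by (auto elim: spine_lam_VarE)
next
  case (needs_fun a c f i e)
  then show ?case by (blast elim: spine_lam_AppE)
next
  case (needs_Lam_arg a c b i)
  from needs_Lam_arg.prems(1) consider "M = b" | n' where "spine_lam n' b M"
    by (auto elim: spine_lam_LamE)
  then show ?case
  proof cases
    case 1
    then show ?thesis using M_unique needs_Lam_arg.hyps by (metis nat.distinct(1))
  next
    case 2
    then show ?thesis using needs_Lam_arg.IH needs_Lam_arg.prems(2) by blast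
  qed
next
  case (needs_Lam_open a b i)
  from needs_Lam_open.prems(1) consider "M = b" | n' where "spine_lam n' b M"
    by (auto elim: spine_lam_LamE)
  then show ?case
  proof cases
    case 1
    then show ?thesis using M_unique needs_Lam_open.hyps by (metis nat.distinct(1))
  next
    case 2
    then show ?thesis using needs_Lam_open.IH needs_Lam_open.prems(2) by blast
  qed
next
  case (needs_arg f M' c e i a)
  from needs_arg.prems(1) have "spine_lam (Suc n) f M" by (auto elim: spine_lam_AppE)
  then have "spine_lam n M' M" using spine_lam_split[OF needs_arg.hyps(1), of n M] by simp
  then show ?case using needs_arg.IH(1) needs_arg.prems(2) by blast
qed

lemma needs_unique: "needs a c t i \<Longrightarrow> needs a' c' t j \<Longrightarrow> i = j"
proof (induction "size t" arbitrary: t a c i a' c' j rule: less_induct)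
  case less
  show ?case
  proof (cases t)
    case (Var k)
    then show ?thesis using less.prems by (auto elim: needs_VarE)
  next
    case (Lam b)
    with less.prems obtain a1 c1 a2 c2 where "needs a1 c1 b (Suc i)" "needs a2 c2 b (Suc j)"
      by (auto elim!: needs_LamE)
    then show ?thesis using less.hyps[of b] Lam by fastforce
  next
    case (App f e)
    have conflict: False if "needs a1 (Suc c1) f k" "spine_lam 0 f M" "needs c2 0 M 0" for a1 c1 k M c2
    proof -
      have "size M < size t" using spine_lam_size[OF that(2)] App by simp
      then have "k' = 0" if "needs a' c' M k'" for a' c' k'
        using less.hyps that \<open>needs c2 0 M 0\<close> by blast
      then show False using needs_spine_body_conflict[OF that] by blast
    qed
    from less.prems App show ?thesis
      using less.hyps[of f] less.hyps[of e]
      by (auto dest!: needs_App_cases dest: conflict)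
  qed
qed

lemma needy_spine_body_not_needs: "spine_lam n t M \<Longrightarrow> needs c 0 M 0 \<Longrightarrow> \<not> needs a c' t j"
  using needs_spine_body_conflict needs_unique by blast

lemma needs_shift: "needs a c t i \<Longrightarrow> needs a c (shift d k t) (if k \<le> i then i + d else i)"
proof (induction arbitrary: k rule: needs.induct)
  case (needs_Var a c i) then show ?case by (auto intro: needs.needs_Var)
next
  case (needs_fun a c f i e) then show ?case using needs.needs_fun[OF needs_fun.IH[of k]] by simp
next
  case (needs_Lam_arg a c b i)
  from needs_Lam_arg.IH[of "Suc k"] show ?case by (auto intro: needs.needs_Lam_arg split: if_splits)
next
  case (needs_Lam_open a b i)
  from needs_Lam_open.IH[of "Suc k"] show ?case
    by (auto intro: needs.needs_Lam_open split: if_splits)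
next
  case (needs_arg f M c e i a)
  from spine_lam_shift[OF needs_arg.hyps(1), of k d] obtain k'
    where k': "k < k'" "spine_lam 0 (shift d k f) (shift d k' M)" by blast
  have "needs c 0 (shift d k' M) 0" using needs_arg.IH(1)[of k'] k' by simp
  then show ?case using needs_arg.IH(2)[of k] k' by (auto intro: needs.needs_arg)
qed

lemma needs_subst: "needs a c t i \<Longrightarrow> i \<noteq> k \<Longrightarrow> needs a c (subst t k u) (if k < i then i - 1 else i)"
proof (induction arbitrary: k u rule: needs.induct)
  case (needs_Var a c i) then show ?case by (auto intro: needs.needs_Var)
next
  case (needs_fun a c f i e) then show ?case using needs.needs_fun[OF needs_fun.IH[of k u]] by simp
next
  case (needs_Lam_arg a c b i)
  from needs_Lam_arg.IH[of "Suc k" "shift 1 0 u"] needs_Lam_arg.prems show ?case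
    by (cases i) (auto intro: needs.needs_Lam_arg split: if_splits)
next
  case (needs_Lam_open a b i)
  from needs_Lam_open.IH[of "Suc k" "shift 1 0 u"] needs_Lam_open.prems show ?case
    by (cases i) (auto intro: needs.needs_Lam_open split: if_splits)
next
  case (needs_arg f M c e i a)
  from spine_lam_subst[OF needs_arg.hyps(1), of k u] obtain k' u'
    where k': "k < k'" "spine_lam 0 (subst f k u) (subst M k' u')" by blast
  have "needs c 0 (subst M k' u') 0" using needs_arg.IH(1)[of k' u'] k' by simp
  then show ?case using needs_arg.IH(2)[of k u] needs_arg.prems k' by (auto intro: needs.needs_arg)
qed

lemma ans_needs: "ans A \<Longrightarrow> needs a c t (i + nb A) \<Longrightarrow> needs a c (plug A t) i"
proof (induction arbitrary: c t i rule: ans.induct)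
  case (2 A1 A2 e)
  have "needs a c (plug A2 t) (Suc (i + nb A1))"
    using 2 by (simp add: add.assoc)
  then have "needs a (Suc c) (Lam (plug A2 t)) (i + nb A1)" by (rule needs_Lam_arg)
  then have "needs a (Suc c) (plug A1 (Lam (plug A2 t))) i" using 2 by blast
  then show ?case by (simp add: needs_fun)
qed simp

lemma outer_deg_needs: "outer_deg k P \<Longrightarrow> needs a (c + k) t (i + nb P) \<Longrightarrow> needs a c (plug P t) i"
proof (induction arbitrary: c t i rule: outer_deg.induct)
  case (outer_deg_App A k P e)
  have "needs a (Suc c) (plug P t) (i + nb A)" using outer_deg_App by (simp add: add.assoc)
  then have "needs a (Suc c) (plug A (plug P t)) i" using ans_needs outer_deg_App by blast
  then show ?case by (simp add: needs_fun)
qed simp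

lemma inner_deg_needs: "inner_deg m D \<Longrightarrow> needs a 0 t (i + nb D) \<Longrightarrow> needs (a + m) 0 (plug D t) i"
proof (induction arbitrary: a t i rule: inner_deg.induct)
  case (inner_deg_Lam A m D)
  have "needs (a + m) 0 (plug D t) (Suc (i + nb A))" using inner_deg_Lam by (simp add: add.assoc)
  then have "needs (a + Suc m) 0 (Lam (plug D t)) (i + nb A)" using needs_Lam_open by simp
  then show ?case using ans_needs inner_deg_Lam by simp
qed simp

lemma ectx_needs: "ectx E \<Longrightarrow> needs a c (plug E (Var (i + nb E))) i"
proof (induction arbitrary: a c i rule: ectx.induct)
  case 1
  then show ?case by (simp add: needs_Var)
next
  case (2 E e)
  then show ?case by (simp add: needs_fun)
next
  case (3 A E)
  have "needs a c (plug E (Var ((i + nb A) + nb E))) (i + nb A)" using 3 by blast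
  then show ?case using ans_needs[OF 3(1), of a c "plug E (Var (i + nb A + nb E))" i]
    by (simp add: add.assoc)
next
  case (4 Au A Ad E1 E2)
  obtain k m where k: "outer_deg k Au" and m: "inner_deg m Ad"
    using 4(1,3) outer_iff_outer_deg inner_iff_inner_deg by blast
  with 4(6) have "m = k" by (simp add: ans_compose_outer_inner_iff)
  let ?M = "plug Ad (plug E1 (Var (nb Ad + nb E1)))"
  have "needs 0 0 (plug E1 (Var (nb Ad + nb E1))) (nb Ad)" by (rule 4(7))
  then have "needs (0 + m) 0 ?M 0" using inner_deg_needs[OF m, of 0 _ 0] by simp
  then have M: "needs (c + k) 0 ?M 0" using needs_mono \<open>m = k\<close> by fastforce
  have "spine_lam 0 (plug A (Lam ?M)) ?M" using 4(2) spine_lam_0_iff by blast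
  from needs_arg[OF this M 4(8)]
  have "needs a (c + k) (App (plug A (Lam ?M)) (plug E2 (Var (i + nb Au + nb E2)))) (i + nb Au)" .
  then show ?case using outer_deg_needs[OF k] by (simp add: add.assoc)
qed

text \<open>The last production of evaluation contexts, for an outer context of any sufficient grade.\<close>

lemma outer_deg_ectx_CAppR:
  assumes "outer_deg k P" "m \<le> k" "inner_deg m Ad" "ans A" "ectx E1" "ectx E2"
  shows "ectx (compose P (CAppR (plug A (Lam (plug Ad (plug E1 (Var (nb Ad + nb E1)))))) E2))"
proof -
  obtain P1 P2 l where P: "P = compose P1 P2" "outer_deg l P1" "outer_deg m P2"
    using outer_deg_split[OF assms(1,2)] by blast
  have "ectx (compose P2 (CAppR (plug A (Lam (plug Ad (plug E1 (Var (nb Ad + nb E1)))))) E2))"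
    using assms(3-6) P(3) outer_iff_outer_deg inner_iff_inner_deg outer_deg_inner_deg_ans
    by (blast intro: ectx.intros(4))
  then show ?thesis using outer_deg_ectx_compose[OF P(2)] P(1) by simp
qed

lemma needs_imp_ectx:
  "needs a c t (j + nb P) \<Longrightarrow> outer_deg c P \<Longrightarrow>
   \<exists>Ad E m. m \<le> a \<and> inner_deg m Ad \<and> ectx E \<and> plug P t = plug Ad (plug E (Var (j + nb Ad + nb E)))"
proof (induction a c t "j + nb P" arbitrary: j P rule: needs.induct)
  case (needs_Var a c)
  then show ?case using outer_deg_ectx_compose[of c P Hole] ectx.intros(1) inner_deg_Hole
    by (intro exI[of _ Hole] exI[of _ P] exI[of _ 0]) auto
next
  case (needs_fun a c f e)
  have "outer_deg (Suc c) (compose P (CAppL Hole e))" using outer_deg_snoc needs_fun by blast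
  with needs_fun.hyps(2)[of j "compose P (CAppL Hole e)"] show ?case by auto
next
  case (needs_Lam_arg a c b)
  obtain R Q where RQ: "ans R" "compose P (CLam Hole) = compose R Q" "outer_deg c Q"
    using outer_deg_close[OF needs_Lam_arg.prems] by blast
  have "Suc (j + nb P) = (j + nb R) + nb Q" "plug P (Lam b) = plug R (plug Q b)"
    using arg_cong[OF RQ(2), of nb] arg_cong[OF RQ(2), of "\<lambda>C. plug C b"] by simp_all
  with needs_Lam_arg.hyps(2) RQ(3) obtain Ad E m where H: "m \<le> a" "inner_deg m Ad" "ectx E"
    "plug P (Lam b) = plug R (plug Ad (plug E (Var (j + nb R + nb Ad + nb E))))" by metis
  show ?case
  proof (cases m)
    case 0
    with H have "plug P (Lam b) = plug (compose R E) (Var (j + nb (compose R E)))"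
      by (simp add: inner_deg_0 add.assoc)
    then show ?thesis using ectx.intros(3)[OF RQ(1) H(3)] inner_deg_Hole
      by (intro exI[of _ Hole] exI[of _ "compose R E"] exI[of _ 0]) auto
  next
    case (Suc m')
    then show ?thesis using H inner_deg_prefix[OF RQ(1), of m' Ad]
      by (intro exI[of _ "compose R Ad"] exI[of _ E] exI[of _ m]) (auto simp: add.assoc)
  qed
next
  case (needs_Lam_open a b)
  then have P: "P = Hole" by (simp add: outer_deg_0)
  with needs_Lam_open.hyps(2)[of "Suc j" Hole] obtain Ad E m
    where H: "m \<le> a" "inner_deg m Ad" "ectx E"
    "b = plug Ad (plug E (Var (Suc j + nb Ad + nb E)))" using outer_deg_Hole by auto
  have "inner_deg (Suc m) (compose Hole (CLam Ad))" using ans.intros(1) H(2) by (rule inner_deg_Lam)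
  then show ?case using H P by (intro exI[of _ "CLam Ad"] exI[of _ E] exI[of _ "Suc m"]) auto
next
  case (needs_arg f M c e a)
  from needs_arg.hyps(5)[of "j + nb P" Hole] obtain E2
    where E2: "ectx E2" "e = plug E2 (Var (j + nb P + nb E2))"
    using outer_deg_Hole by (auto simp: inner_deg_0)
  from needs_arg.hyps(3)[of 0 Hole] obtain Ad1 E1 m1 where E1: "m1 \<le> c" "inner_deg m1 Ad1" "ectx E1"
    "M = plug Ad1 (plug E1 (Var (nb Ad1 + nb E1)))" using outer_deg_Hole by auto
  from needs_arg.hyps(1) obtain A where A: "ans A" "f = plug A (Lam M)"
    by (auto simp: spine_lam_0_iff)
  have "ectx (compose P (CAppR f E2))"
    using outer_deg_ectx_CAppR[OF needs_arg.prems E1(1,2) A(1) E1(3) E2(1)] A(2) E1(4) by simp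
  moreover have "plug P (App f e) = plug (compose P (CAppR f E2)) (Var (j + nb (compose P (CAppR f E2))))"
    using E2(2) by (simp add: add.assoc)
  ultimately show ?case using inner_deg_Hole by fastforce
qed

section \<open>Parallel reduction\<close>

text \<open>The contractum of \<open>A\<^sub>1[\<lambda>N] A\<^sub>2[\<lambda>b]\<close>, as on the right-hand side of \<open>beta_need\<close>.\<close>

definition contract :: "ctx \<Rightarrow> ctx \<Rightarrow> trm \<Rightarrow> trm \<Rightarrow> trm" where
  "contract A1 A2 N b =
     plug A1 (plug (cshift (nb A1) 0 A2)
       (subst (shift (nb A2) 1 N) 0 (shift (nb A1) (nb A2) (Lam b))))"

text \<open>The index \<open>K\<close> counts the arguments pending at the current position;
  a redex \<open>A\<^sub>1[\<lambda>x.N] A\<^sub>2[v]\<close> may be contracted only if \<open>N\<close> needs \<open>x\<close> within that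
  budget, i.e. only if the surrounding context can be completed to an instance of
  \<open>\<beta>\<^sub>n\<^sub>e\<^sub>e\<^sub>d\<close> (\<open>step_contract\<close>). Arguments are evaluated from scratch, hence \<open>K = 0\<close> there.\<close>

inductive par :: "nat \<Rightarrow> trm \<Rightarrow> trm \<Rightarrow> bool" and par_ctx :: "ctx \<Rightarrow> ctx \<Rightarrow> bool" where
  par_Var: "par K (Var i) (Var i)"
| par_Lam: "par (K - 1) b b' \<Longrightarrow> par K (Lam b) (Lam b')"
| par_App: "par (Suc K) f f' \<Longrightarrow> par 0 e e' \<Longrightarrow> par K (App f e) (App f' e')"
| par_redex: "ans A1 \<Longrightarrow> ans A2 \<Longrightarrow> needs K 0 N 0 \<Longrightarrow> par_ctx A1 A1' \<Longrightarrow> par K N N' \<Longrightarrow>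
       par_ctx A2 A2' \<Longrightarrow> par 0 b b' \<Longrightarrow>
       par K (App (plug A1 (Lam N)) (plug A2 (Lam b))) (contract A1' A2' N' b')"
| par_ctx_Hole: "par_ctx Hole Hole"
| par_ctx_CLam: "par_ctx C C' \<Longrightarrow> par_ctx (CLam C) (CLam C')"
| par_ctx_CAppL: "par_ctx C C' \<Longrightarrow> par 0 e e' \<Longrightarrow> par_ctx (CAppL C e) (CAppL C' e')"

lemma par_refl: "par K t t"
  by (induction t arbitrary: K) (auto intro: par_par_ctx.intros)

lemma par_ctx_compose: "par_ctx C C' \<Longrightarrow> par_ctx D D' \<Longrightarrow> par_ctx (compose C D) (compose C' D')"
proof (induction C arbitrary: C')
  case Hole then show ?case by (auto elim: par_ctx.cases)
next
  case (CLam C)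
  from CLam.prems obtain C0 where "C' = CLam C0" "par_ctx C C0" by (auto elim: par_ctx.cases)
  with CLam show ?case by (auto intro: par_ctx_CLam)
next
  case (CAppL C e)
  from CAppL.prems obtain C0 e' where "C' = CAppL C0 e'" "par_ctx C C0" "par 0 e e'"
    by (auto elim: par_ctx.cases)
  with CAppL show ?case by (auto intro: par_ctx_CAppL)
next
  case (CAppR t C) then show ?case by (auto elim: par_ctx.cases)
qed

lemma ans_par_ctx_refl: "ans A \<Longrightarrow> par_ctx A A"
  by (induction rule: ans.induct) (auto intro!: par_par_ctx.intros par_ctx_compose par_refl)

lemma par_ctx_nb: "par_ctx C C' \<Longrightarrow> nb C' = nb C"
  by (induction C arbitrary: C' rule: ctx.induct) (auto elim: par_ctx.cases)

lemma par_ctx_decomp: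
  "par_ctx (compose C D) X \<Longrightarrow> \<exists>C' D'. X = compose C' D' \<and> par_ctx C C' \<and> par_ctx D D'"
proof (induction C arbitrary: X)
  case Hole then show ?case using par_ctx_Hole by force
next
  case (CLam C)
  from CLam.prems obtain X0 where "X = CLam X0" "par_ctx (compose C D) X0"
    by (auto elim: par_ctx.cases)
  with CLam.IH show ?case by (force intro: par_ctx_CLam)
next
  case (CAppL C e)
  from CAppL.prems obtain X0 e' where "X = CAppL X0 e'" "par_ctx (compose C D) X0" "par 0 e e'"
    by (auto elim: par_ctx.cases)
  with CAppL.IH show ?case by (force intro: par_ctx_CAppL)
next
  case (CAppR t C)
  then show ?case by (auto elim: par_ctx.cases)
qed

lemma par_ctx_ans: "ans A \<Longrightarrow> par_ctx A A' \<Longrightarrow> ans A'"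
proof (induction arbitrary: A' rule: ans.induct)
  case 1 then show ?case by (auto elim: par_ctx.cases intro: ans.intros)
next
  case (2 A1 A2 e)
  from "2.prems" obtain X e' where X: "A' = CAppL X e'" "par_ctx (compose A1 (CLam A2)) X"
    by (auto elim: par_ctx.cases)
  from par_ctx_decomp[OF X(2)] obtain C1 D
    where CD: "X = compose C1 D" "par_ctx A1 C1" "par_ctx (CLam A2) D" by blast
  from CD(3) obtain D0 where "D = CLam D0" "par_ctx A2 D0" by (auto elim: par_ctx.cases)
  with CD X 2 show ?case by (auto intro: ans.intros)
qed

lemma par_mono: "par K t t' \<Longrightarrow> K \<le> K' \<Longrightarrow> par K' t t'"
  by (induction arbitrary: K' rule: par_par_ctx.inducts(1)[where ?P2.0 = "\<lambda>_ _. True"])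
    (auto intro: par_par_ctx.intros needs_mono diff_le_mono)

lemma par_plug_ans: "ans A \<Longrightarrow> par_ctx A A' \<Longrightarrow> par K X X' \<Longrightarrow> par K (plug A X) (plug A' X')"
proof (induction arbitrary: A' K X X' rule: ans.induct)
  case 1 then show ?case by (auto elim: par_ctx.cases)
next
  case (2 A1 A2 e)
  from "2.prems"(1) obtain Y e'
    where Y: "A' = CAppL Y e'" "par_ctx (compose A1 (CLam A2)) Y" "par 0 e e'"
    by (auto elim: par_ctx.cases)
  from par_ctx_decomp[OF Y(2)] obtain C1 D
    where CD: "Y = compose C1 D" "par_ctx A1 C1" "par_ctx (CLam A2) D" by blast
  from CD(3) obtain D0 where D0: "D = CLam D0" "par_ctx A2 D0" by (auto elim: par_ctx.cases)
  have "par K (plug A2 X) (plug D0 X')" using "2.IH"(2)[OF D0(2) "2.prems"(2)] .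
  then have "par (Suc K) (Lam (plug A2 X)) (Lam (plug D0 X'))" by (intro par_Lam) simp
  then have "par (Suc K) (plug A1 (Lam (plug A2 X))) (plug C1 (Lam (plug D0 X')))"
    using "2.IH"(1)[OF CD(2)] by blast
  then show ?case using Y CD D0 by (auto intro: par_App)
qed

lemma par_plug_outer_deg: "outer_deg k P \<Longrightarrow> par (K + k) X X' \<Longrightarrow> par K (plug P X) (plug P X')"
proof (induction arbitrary: K rule: outer_deg.induct)
  case outer_deg_Hole then show ?case by simp
next
  case (outer_deg_App A k P e)
  have "par (Suc K) (plug P X) (plug P X')" using outer_deg_App by simp
  then have "par (Suc K) (plug A (plug P X)) (plug A (plug P X'))"
    using par_plug_ans[OF outer_deg_App(1) ans_par_ctx_refl[OF outer_deg_App(1)]] by blast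
  then show ?case by (auto intro: par_App par_refl)
qed

lemma beta_par: "beta_need l r \<Longrightarrow> par K l r"
proof (induction rule: beta_need.induct)
  case (1 Au A1 Ad E A2 b)
  obtain k m where k: "outer_deg k Au" and m: "inner_deg m Ad"
    using 1(1,3) outer_iff_outer_deg inner_iff_inner_deg by blast
  with 1(6) have "m = k" by (simp add: ans_compose_outer_inner_iff)
  let ?M = "plug Ad (plug E (Var (nb Ad + nb E)))"
  have "needs 0 0 (plug E (Var (nb Ad + nb E))) (nb Ad)" using ectx_needs[OF 1(4)] .
  then have "needs (0 + m) 0 ?M 0" using inner_deg_needs[OF m, of 0 _ 0] by simp
  then have "needs (K + k) 0 ?M 0" using needs_mono \<open>m = k\<close> by fastforce
  then have "par (K + k) (App (plug A1 (Lam ?M)) (plug A2 (Lam b))) (contract A1 A2 ?M b)"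
    using 1 by (intro par_redex ans_par_ctx_refl par_refl)
  then show ?case using par_plug_outer_deg[OF k] by (simp add: contract_def)
qed

lemma step_par: "step e e' \<Longrightarrow> par K e e'"
  by (induction arbitrary: K rule: step.induct) (auto intro: beta_par par_par_ctx.intros par_refl)

lemma redex_not_needs:
  assumes "ans A1" "ans A2" "needs K 0 N 0"
  shows "\<not> needs a c (App (plug A1 (Lam N)) (plug A2 (Lam b))) i"
    and "spine_lam n (App (plug A1 (Lam N)) (plug A2 (Lam b))) M \<Longrightarrow> \<not> needs c 0 M 0"
proof -
  have N: "spine_lam 0 (plug A1 (Lam N)) N" and b: "spine_lam 0 (plug A2 (Lam b)) b"
    using assms(1,2) spine_lam_0_iff by blast+
  show "\<not> needs a c (App (plug A1 (Lam N)) (plug A2 (Lam b))) i"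
    using needy_spine_body_not_needs[OF N assms(3)] spine_lam_not_needs[OF b, of 0 0]
    by (auto dest: needs_App_cases)
  assume "spine_lam n (App (plug A1 (Lam N)) (plug A2 (Lam b))) M"
  then have "spine_lam n N M" using spine_lam_split[OF N, of n M] by (auto elim: spine_lam_AppE)
  then show "\<not> needs c 0 M 0" using needy_spine_body_not_needs assms(3) by blast
qed

lemma par_preserves_needs:
  "par K t t' \<Longrightarrow>
     (needs a c t i \<longrightarrow> needs a c t' i) \<and>
     (spine_lam n t M \<longrightarrow> needs c 0 M 0 \<longrightarrow> (\<exists>M'. spine_lam n t' M' \<and> needs c 0 M' 0))"
proof (induction arbitrary: a c i n M rule: par_par_ctx.inducts(1)[where ?P2.0 = "\<lambda>_ _. True"])
  case (par_Var K i)
  then show ?case by (auto elim: spine_lam_VarE)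
next
  case (par_Lam K b b')
  have "needs a c (Lam b') i" if "needs a c (Lam b) i"
    using that par_Lam.IH by (auto elim!: needs_LamE intro: needs.intros)
  moreover have "\<exists>M'. spine_lam n (Lam b') M' \<and> needs c 0 M' 0"
    if "spine_lam n (Lam b) M" "needs c 0 M 0"
  proof (cases n)
    case 0
    with that(1) have "M = b" by (auto elim: spine_lam_LamE)
    with that(2) par_Lam.IH have "needs c 0 b' 0" by blast
    then show ?thesis using 0 spine_lam_here by blast
  next
    case (Suc n')
    with that par_Lam.IH show ?thesis by (blast elim: spine_lam_LamE intro: spine_lam_Lam)
  qed
  ultimately show ?case by blast
next
  case (par_App K f f' e e')
  have "needs a c (App f' e') i" if "needs a c (App f e) i"
    using needs_App_cases[OF that] par_App.IH by (blast intro: needs_fun needs_arg)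
  moreover have "\<exists>M'. spine_lam n (App f' e') M' \<and> needs c 0 M' 0"
    if "spine_lam n (App f e) M" "needs c 0 M 0"
    using that par_App.IH by (blast elim: spine_lam_AppE intro: spine_lam_App)
  ultimately show ?case by blast
next
  case (par_redex A1 A2 K N A1' N' A2' b b')
  then show ?case using redex_not_needs[OF par_redex.hyps(1-3)] by blast
qed auto

lemma par_needs: "par K t t' \<Longrightarrow> needs a c t i \<Longrightarrow> needs a c t' i"
  using par_preserves_needs by blast

text \<open>The number of arguments pending at the hole of \<open>C\<close> when \<open>K\<close> are pending at its root,
  following the index discipline of \<open>par\<close>.\<close>

fun pending :: "nat \<Rightarrow> ctx \<Rightarrow> nat" where
  "pending K Hole = K"
| "pending K (CLam C) = pending (K - 1) C"
| "pending K (CAppL C t) = pending (Suc K) C"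
| "pending K (CAppR t C) = pending 0 C"

lemma pending_compose [simp]: "pending K (compose C D) = pending (pending K C) D"
  by (induction C arbitrary: K) auto

lemma ans_pending: "ans A \<Longrightarrow> pending K A = K"
  by (induction arbitrary: K rule: ans.induct) auto

lemma pending_outer_deg_suffix:
  "outer_deg K Q \<Longrightarrow> m \<le> pending K C \<Longrightarrow>
   \<exists>C' Au. compose Q C = compose C' Au \<and> outer_deg m Au"
proof (induction C arbitrary: K Q)
  case Hole
  have "m \<le> K" using Hole.prems(2) by simp
  from outer_deg_split[OF Hole.prems(1) this] obtain P1 P2 l
    where "Q = compose P1 P2" "outer_deg m P2" by blast
  then show ?case by auto
next
  case (CAppL C e)
  have "outer_deg (Suc K) (compose Q (CAppL Hole e))" using outer_deg_snoc CAppL by blast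
  with CAppL.IH[of "Suc K" "compose Q (CAppL Hole e)"] CAppL.prems show ?case by auto
next
  case (CLam C)
  show ?case
  proof (cases K)
    case 0
    with CLam have Q: "Q = Hole" by (simp add: outer_deg_0)
    from CLam.IH[of 0 Hole] CLam.prems 0 outer_deg.outer_deg_Hole obtain C' Au
      where "C = compose C' Au" "outer_deg m Au" by auto
    then show ?thesis using Q by (intro exI[of _ "CLam C'"] exI[of _ Au]) auto
  next
    case (Suc K')
    from outer_deg_close[OF CLam.prems(1)[unfolded Suc]] obtain R Q'
      where RQ: "ans R" "compose Q (CLam Hole) = compose R Q'" "outer_deg K' Q'"
      by blast
    from CLam.IH[OF RQ(3)] CLam.prems Suc obtain C' Au
      where H: "compose Q' C = compose C' Au" "outer_deg m Au" by auto
    have "compose Q (CLam C) = compose (compose Q (CLam Hole)) C" by simp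
    also have "\<dots> = compose R (compose Q' C)" using RQ(2) by simp
    also have "\<dots> = compose (compose R C') Au" using H by simp
    finally show ?thesis using H by blast
  qed
next
  case (CAppR t C)
  from CAppR.IH[of 0 Hole] CAppR.prems outer_deg.outer_deg_Hole obtain C' Au
    where "C = compose C' Au" "outer_deg m Au" by auto
  then show ?case by (intro exI[of _ "compose Q (CAppR t C')"] exI[of _ Au]) auto
qed

lemma step_plug: "step e e' \<Longrightarrow> step (plug C e) (plug C e')"
  by (induction C) (auto intro: step.intros)

lemma step_contract:
  assumes "ans A1" "ans A2" "needs K 0 N 0" "K \<le> pending 0 C"
  shows "step (plug C (App (plug A1 (Lam N)) (plug A2 (Lam b)))) (plug C (contract A1 A2 N b))"
proof -
  obtain Ad E m
    where G: "m \<le> K" "inner_deg m Ad" "ectx E" "N = plug Ad (plug E (Var (nb Ad + nb E)))"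
    using needs_imp_ectx[of K 0 N 0 Hole] assms(3) outer_deg_Hole by auto
  obtain C' Au where C: "C = compose C' Au" "outer_deg m Au"
    using pending_outer_deg_suffix[OF outer_deg_Hole, of m C] G(1) assms(4) by auto
  have "outer Au" "inner Ad" "ans (compose Au Ad)"
    using C(2) G(2) outer_iff_outer_deg inner_iff_inner_deg outer_deg_inner_deg_ans by blast+
  then have "beta_need (plug Au (App (plug A1 (Lam N)) (plug A2 (Lam b)))) (plug Au (contract A1 A2 N b))"
    unfolding contract_def G(4) using assms(1,2) G(3) by (intro beta_need.intros)
  then show ?thesis using C(1) step_plug[OF step.intros(1)] by simp
qed

lemma par_steps:
  "par K t t' \<Longrightarrow> K \<le> pending 0 C \<Longrightarrow> step\<^sup>*\<^sup>* (plug C t) (plug C t')"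
  "par_ctx A A' \<Longrightarrow> step\<^sup>*\<^sup>* (plug D (plug A X)) (plug D (plug A' X))"
proof (induction arbitrary: C and D X rule: par_par_ctx.inducts)
  case (par_Lam K b b')
  then show ?case using par_Lam.IH[of "compose C (CLam Hole)"] by simp
next
  case (par_App K f f' e e')
  have "step\<^sup>*\<^sup>* (plug C (App f e)) (plug C (App f' e))"
    using par_App.IH(1)[of "compose C (CAppL Hole e)"] par_App.prems by simp
  also have "step\<^sup>*\<^sup>* \<dots> (plug C (App f' e'))"
    using par_App.IH(2)[of "compose C (CAppR f' Hole)"] by simp
  finally show ?case .
next
  case (par_redex A1 A2 K N A1' N' A2' b b')
  let ?a = "plug A2 (Lam b)" and ?f = "plug A1' (Lam N')"
  have "ans A1'" "ans A2'" using par_ctx_ans par_redex.hyps by blast+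
  have "step\<^sup>*\<^sup>* (plug C (App (plug A1 (Lam N)) ?a)) (plug C (App (plug A1' (Lam N)) ?a))"
    using par_redex.IH(1)[of "compose C (CAppL Hole ?a)" "Lam N"] by simp
  also have "step\<^sup>*\<^sup>* \<dots> (plug C (App ?f ?a))"
    using par_redex.IH(2)[of "compose C (CAppL (compose A1' (CLam Hole)) ?a)"] par_redex.prems
    by (simp add: ans_pending[OF \<open>ans A1'\<close>])
  also have "step\<^sup>*\<^sup>* \<dots> (plug C (App ?f (plug A2' (Lam b))))"
    using par_redex.IH(3)[of "compose C (CAppR ?f Hole)" "Lam b"] by simp
  also have "step\<^sup>*\<^sup>* \<dots> (plug C (App ?f (plug A2' (Lam b'))))"
    using par_redex.IH(4)[of "compose C (CAppR ?f (compose A2' (CLam Hole)))"] by simp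
  also have "step \<dots> (plug C (contract A1' A2' N' b'))"
    using step_contract \<open>ans A1'\<close> \<open>ans A2'\<close> par_needs[OF par_redex.hyps(5,3)] par_redex.prems
    by blast
  finally show ?case .
next
  case (par_ctx_CLam C C')
  then show ?case using par_ctx_CLam.IH[of "compose D (CLam Hole)" X] by simp
next
  case (par_ctx_CAppL C C' e e')
  have "step\<^sup>*\<^sup>* (plug D (App (plug C X) e)) (plug D (App (plug C' X) e))"
    using par_ctx_CAppL.IH(1)[of "compose D (CAppL Hole e)" X] by simp
  also have "step\<^sup>*\<^sup>* \<dots> (plug D (App (plug C' X) e'))"
    using par_ctx_CAppL.IH(2)[of "compose D (CAppR (plug C' X) Hole)"] by simp
  finally show ?case by simp
qed simp_all

lemma contract_shift:
  "shift d c (contract A1 A2 N b) =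
   contract (cshift d c A1) (cshift d c A2) (shift d (c + nb A1 + 1) N) (shift d (c + nb A2 + 1) b)"
proof -
  define n1 where "n1 = nb A1"
  define n2 where "n2 = nb A2"
  have e1: "cshift d (c + n1) (cshift n1 0 A2) = cshift n1 0 (cshift d c A2)"
    using cshift_cshift_comm[of 0 c n1 d A2] by simp
  have core: "shift d (c + n1 + n2) (subst (shift n2 1 N) 0 (shift n1 n2 (Lam b))) =
     subst (shift n2 1 (shift d (c + n1 + 1) N)) 0 (shift n1 n2 (Lam (shift d (c + n2 + 1) b)))"
  proof -
    have "shift d (c + n1 + n2) (subst (shift n2 1 N) 0 (shift n1 n2 (Lam b))) =
          subst (shift d (Suc (c + n1 + n2)) (shift n2 1 N)) 0 (shift d (c + n1 + n2) (shift n1 n2 (Lam b)))"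
      by (rule shift_subst_lt) simp
    also have "shift d (Suc (c + n1 + n2)) (shift n2 1 N) = shift n2 1 (shift d (c + n1 + 1) N)"
      using shift_shift_comm[of 1 "c + n1 + 1" n2 d N] by (simp add: add.commute add.left_commute)
    also have "shift d (c + n1 + n2) (shift n1 n2 (Lam b)) = shift n1 n2 (shift d (c + n2) (Lam b))"
      using shift_shift_comm[of n2 "c + n2" n1 d "Lam b"]
        by (simp add: add.commute add.left_commute)
    also have "shift d (c + n2) (Lam b) = Lam (shift d (c + n2 + 1) b)" by simp
    finally show ?thesis .
  qed
  show ?thesis unfolding contract_def n1_def[symmetric] n2_def[symmetric]
    by (simp only: shift_plug nb_cshift e1 core n1_def[symmetric] n2_def[symmetric])
qed

lemma contract_subst:
  "subst (contract A1 A2 N b) k u =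
   contract (csubst A1 k u) (csubst A2 k u) (subst N (k + nb A1 + 1) (shift (nb A1 + 1) 0 u))
            (subst b (k + nb A2 + 1) (shift (nb A2 + 1) 0 u))"
proof -
  define n1 where "n1 = nb A1"
  define n2 where "n2 = nb A2"
  have e1: "csubst (cshift n1 0 A2) (k + n1) (shift n1 0 u) = cshift n1 0 (csubst A2 k u)"
    using csubst_cshift[of 0 k n1 A2 u] by simp
  define U where "U = shift n2 0 (shift n1 0 u)"
  have U1: "U = shift (n1 + n2) 0 u" unfolding U_def using shift_shift_add[of 0 0 n1 n2 u] by simp
  have core: "subst (subst (shift n2 1 N) 0 (shift n1 n2 (Lam b))) (k + n1 + n2) U =
     subst (shift n2 1 (subst N (k + n1 + 1) (shift (n1 + 1) 0 u))) 0
       (shift n1 n2 (Lam (subst b (k + n2 + 1) (shift (n2 + 1) 0 u))))"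
  proof -
    have "subst (subst (shift n2 1 N) 0 (shift n1 n2 (Lam b))) (k + n1 + n2) U =
          subst (subst (shift n2 1 N) (Suc (k + n1 + n2)) (shift 1 0 U)) 0
                (subst (shift n1 n2 (Lam b)) (k + n1 + n2) U)"
      by (rule subst_subst) simp
    also have "shift 1 0 U = shift n2 1 (shift (n1 + 1) 0 u)"
      unfolding U1 using shift_shift_add[of 0 1 "n1 + 1" n2 u] shift_shift_add[of 0 0 "n1 + n2" 1 u]
      by (simp add: add.commute add.left_commute)
    also have "subst (shift n2 1 N) (Suc (k + n1 + n2)) (shift n2 1 (shift (n1 + 1) 0 u)) =
               shift n2 1 (subst N (k + n1 + 1) (shift (n1 + 1) 0 u))"
      using shift_subst_ge[of 1 "k + n1 + 1" n2 N "shift (n1 + 1) 0 u"]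
      by (simp add: add.commute add.left_commute)
    also have "subst (shift n1 n2 (Lam b)) (k + n1 + n2) U =
               shift n1 n2 (subst (Lam b) (k + n2) (shift n2 0 u))"
    proof -
      have "U = shift n1 n2 (shift n2 0 u)"
        unfolding U1 using shift_shift_add[of 0 n2 n2 n1 u] by (simp add: add.commute)
      then show ?thesis using shift_subst_ge[of n2 "k + n2" n1 "Lam b" "shift n2 0 u"]
        by (simp add: add.commute add.left_commute)
    qed
    also have "subst (Lam b) (k + n2) (shift n2 0 u) = Lam (subst b (k + n2 + 1) (shift (n2 + 1) 0 u))"
      by simp
    finally show ?thesis .
  qed
  show ?thesis unfolding contract_def n1_def[symmetric] n2_def[symmetric]
    by (simp only: subst_plug nb_cshift nb_csubst e1 U_def[symmetric] core n1_def[symmetric] n2_def[symmetric])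
qed


lemma par_shift:
  "par K t t' \<Longrightarrow> par K (shift d c t) (shift d c t')"
  "par_ctx C C' \<Longrightarrow> par_ctx (cshift d c C) (cshift d c C')"
proof (induction arbitrary: c and c rule: par_par_ctx.inducts)
  case (par_redex A1 A2 K N A1' N' A2' b b')
  have "nb A1' = nb A1" "nb A2' = nb A2" using par_ctx_nb par_redex.hyps(4,6) by blast+
  moreover have "needs K 0 (shift d (Suc (c + nb A1)) N) 0"
    using needs_shift[OF par_redex.hyps(3), of d "Suc (c + nb A1)"] by simp
  ultimately show ?case
    using par_redex ans_cshift
    by (auto simp: shift_plug contract_shift intro!: par_par_ctx.par_redex)
qed (auto intro: par_par_ctx.intros)

lemma par_subst:
  "par K t t' \<Longrightarrow> par 0 u u' \<Longrightarrow> par K (subst t k u) (subst t' k u')"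
  "par_ctx C C' \<Longrightarrow> par 0 u u' \<Longrightarrow> par_ctx (csubst C k u) (csubst C' k u')"
proof (induction arbitrary: k u u' and k u u' rule: par_par_ctx.inducts)
  case (par_Var K i)
  then show ?case by (auto intro: par_par_ctx.intros par_mono)
next
  case (par_Lam K b b')
  have "par 0 (shift 1 0 u) (shift 1 0 u')" using par_Lam.prems by (rule par_shift)
  then show ?case using par_Lam.IH by (simp add: par_par_ctx.par_Lam)
next
  case (par_redex A1 A2 K N A1' N' A2' b b')
  have "nb A1' = nb A1" "nb A2' = nb A2" using par_ctx_nb par_redex.hyps(4,6) by blast+
  moreover have "needs K 0 (subst N (Suc (k + nb A1)) (shift (Suc (nb A1)) 0 u)) 0"
    using needs_subst[OF par_redex.hyps(3), of "Suc (k + nb A1)"] by simp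
  moreover have "par 0 (shift n 0 u) (shift n 0 u')" for n using par_redex.prems by (rule par_shift)
  ultimately show ?case
    using par_redex ans_csubst
    by (auto simp: subst_plug contract_subst intro!: par_par_ctx.par_redex)
next
  case (par_ctx_CLam C C')
  have "par 0 (shift 1 0 u) (shift 1 0 u')" using par_ctx_CLam.prems by (rule par_shift)
  then show ?case using par_ctx_CLam.IH by (simp add: par_par_ctx.par_ctx_CLam)
qed (auto intro: par_par_ctx.intros)

lemma contract_par:
  assumes "ans A1" "ans A2" "par_ctx A1 A1'" "par_ctx A2 A2'" "par K N N'" "par 0 b b'"
  shows "par K (contract A1 A2 N b) (contract A1' A2' N' b')"
proof -
  have n1: "nb A1' = nb A1" using par_ctx_nb assms(3) by blast
  have n2: "nb A2' = nb A2" using par_ctx_nb assms(4) by blast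
  have "par 0 (Lam b) (Lam b')" using assms(6) by (intro par_Lam) simp
  then have v: "par 0 (shift (nb A1) (nb A2) (Lam b)) (shift (nb A1) (nb A2) (Lam b'))"
    by (rule par_shift)
  have "par K (shift (nb A2) 1 N) (shift (nb A2) 1 N')" using assms(5) by (rule par_shift)
  then have y: "par K (subst (shift (nb A2) 1 N) 0 (shift (nb A1) (nb A2) (Lam b)))
                      (subst (shift (nb A2) 1 N') 0 (shift (nb A1) (nb A2) (Lam b')))"
    using v by (rule par_subst)
  have "par K (plug (cshift (nb A1) 0 A2) (subst (shift (nb A2) 1 N) 0 (shift (nb A1) (nb A2) (Lam b))))
              (plug (cshift (nb A1) 0 A2') (subst (shift (nb A2) 1 N') 0 (shift (nb A1) (nb A2) (Lam b'))))"
    using par_plug_ans[OF ans_cshift[OF assms(2)] par_shift(2)[OF assms(4)] y] .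
  then show ?thesis unfolding contract_def using par_plug_ans[OF assms(1) assms(3)] n1 n2 by simp
qed

lemma par_VarE: "par K (Var i) t' \<Longrightarrow> t' = Var i"
  by (auto elim: par.cases)

lemma par_LamE: "par K (Lam b) t' \<Longrightarrow> \<exists>b'. t' = Lam b' \<and> par (K - 1) b b'"
  by (auto elim: par.cases)

lemma par_AppE:
  assumes "par K (App f e) t'"
  shows "(\<exists>f' e'. t' = App f' e' \<and> par (Suc K) f f' \<and> par 0 e e') \<or>
    (\<exists>A1 A2 N b A1' A2' N' b'. ans A1 \<and> ans A2 \<and> needs K 0 N 0 \<and>
       par_ctx A1 A1' \<and> par K N N' \<and> par_ctx A2 A2' \<and> par 0 b b' \<and>
       f = plug A1 (Lam N) \<and> e = plug A2 (Lam b) \<and> t' = contract A1' A2' N' b')"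
  using assms
proof (cases rule: par.cases)
  case (par_App f' e') then show ?thesis by blast
next
  case (par_redex A1 A2 N A1' N' A2' b b') then show ?thesis by blast
qed

text \<open>The abstraction on the spine survives parallel reduction when no contracted redex can
  consume it: either it lies beyond the budget, or its body needs its parameter, which makes a
  redex containing it on the spine impossible (\<open>redex_not_needs\<close>).\<close>

lemma par_spine_inv:
  "spine n W \<Longrightarrow> par K (plug W (Lam M)) t' \<Longrightarrow> K \<le> n \<or> (\<exists>c. needs c 0 M 0) \<Longrightarrow>
   \<exists>W' M'. t' = plug W' (Lam M') \<and> par_ctx W W' \<and> par (pending K (compose W (CLam Hole))) M M'"
proof (induction W arbitrary: n K t')
  case Hole
  from par_LamE[of K M t'] Hole.prems(2) obtain M' where "t' = Lam M'" "par (K - 1) M M'" by auto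
  then show ?case using par_ctx_Hole by (intro exI[of _ Hole] exI[of _ M']) auto
next
  case (CLam W1)
  from CLam.prems(1) obtain n1 where n1: "n = Suc n1" "spine n1 W1" by (auto elim: spine.cases)
  from par_LamE[of K "plug W1 (Lam M)" t'] CLam.prems(2) obtain t1
    where t1: "t' = Lam t1" "par (K - 1) (plug W1 (Lam M)) t1"
    by auto
  have "K - 1 \<le> n1 \<or> (\<exists>c. needs c 0 M 0)" using CLam.prems(3) n1 by auto
  from CLam.IH[OF n1(2) t1(2) this] obtain W' M' where "t1 = plug W' (Lam M')" "par_ctx W1 W'"
    "par (pending (K - 1) (compose W1 (CLam Hole))) M M'" by blast
  then show ?case using t1 by (intro exI[of _ "CLam W'"] exI[of _ M']) (auto intro: par_ctx_CLam)
next
  case (CAppL W1 e)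
  from CAppL.prems(1) have w1: "spine (Suc n) W1" by (auto elim: spine.cases)
  have "par K (App (plug W1 (Lam M)) e) t'" using CAppL.prems(2) by simp
  from par_AppE[OF this]
  show ?case
  proof (elim disjE exE conjE)
    fix f' e' assume h: "t' = App f' e'" "par (Suc K) (plug W1 (Lam M)) f'" "par 0 e e'"
    have "Suc K \<le> Suc n \<or> (\<exists>c. needs c 0 M 0)" using CAppL.prems(3) by auto
    from CAppL.IH[OF w1 h(2) this] obtain W' M' where "f' = plug W' (Lam M')" "par_ctx W1 W'"
      "par (pending (Suc K) (compose W1 (CLam Hole))) M M'" by blast
    then show ?thesis using h
      by (intro exI[of _ "CAppL W' e'"] exI[of _ M']) (auto intro: par_ctx_CAppL)
  next
    fix A1 A2 N b A1' A2' N' b'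
    assume h: "ans A1" "needs K 0 N 0" "plug W1 (Lam M) = plug A1 (Lam N)"
    have "spine_lam 0 (plug W1 (Lam M)) N" using h(1,3) spine_lam_0_iff by metis
    moreover have "spine_lam (0 + n + 1) (plug W1 (Lam M)) M" using w1 spine_lam_iff by auto
    ultimately have "spine_lam n N M" by (rule spine_lam_split)
    then show ?thesis
      using CAppL.prems(3) h(2) spine_lam_not_needs[of n N M K 0] needy_spine_body_not_needs
      by auto
  qed
next
  case (CAppR t W1)
  then show ?case by (auto elim: spine.cases)
qed

lemma par_answer_inv:
  assumes "ans A" "par K (plug A (Lam M)) t'" "K = 0 \<or> (\<exists>c. needs c 0 M 0)"
  shows "\<exists>A' M'. t' = plug A' (Lam M') \<and> par_ctx A A' \<and> par (K - 1) M M'"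
proof -
  have "K \<le> 0 \<or> (\<exists>c. needs c 0 M 0)" using assms(3) by auto
  from par_spine_inv[OF ans_spine[OF assms(1)] assms(2) this] show ?thesis
    by (simp add: ans_pending[OF assms(1)])
qed

section \<open>Complete development and confluence\<close>

text \<open>The complete development contracts every redex that \<open>par K\<close> may contract.\<close>

definition is_redex :: "nat \<Rightarrow> trm \<Rightarrow> bool" where
  "is_redex K t \<longleftrightarrow>
     (\<exists>A1 N A2 b. ans A1 \<and> ans A2 \<and> needs K 0 N 0 \<and> t = App (plug A1 (Lam N)) (plug A2 (Lam b)))"

inductive cd :: "nat \<Rightarrow> trm \<Rightarrow> trm \<Rightarrow> bool" and cd_ctx :: "ctx \<Rightarrow> ctx \<Rightarrow> bool" where
  cd_Var: "cd K (Var i) (Var i)"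
| cd_Lam: "cd (K - 1) b b' \<Longrightarrow> cd K (Lam b) (Lam b')"
| cd_App: "\<not> is_redex K (App f e) \<Longrightarrow> cd (Suc K) f f' \<Longrightarrow> cd 0 e e' \<Longrightarrow> cd K (App f e) (App f' e')"
| cd_redex: "ans A1 \<Longrightarrow> ans A2 \<Longrightarrow> needs K 0 N 0 \<Longrightarrow> cd_ctx A1 A1' \<Longrightarrow> cd K N N' \<Longrightarrow>
       cd_ctx A2 A2' \<Longrightarrow> cd 0 b b' \<Longrightarrow>
       cd K (App (plug A1 (Lam N)) (plug A2 (Lam b))) (contract A1' A2' N' b')"
| cd_ctx_Hole: "cd_ctx Hole Hole"
| cd_ctx_CLam: "cd_ctx C C' \<Longrightarrow> cd_ctx (CLam C) (CLam C')"
| cd_ctx_CAppL: "cd_ctx C C' \<Longrightarrow> cd 0 e e' \<Longrightarrow> cd_ctx (CAppL C e) (CAppL C' e')"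

lemma cd_ctx_exists:
  "spine n C \<Longrightarrow> (\<forall>s. size s < size (plug C X) \<longrightarrow> (\<exists>s'. cd 0 s s')) \<Longrightarrow> \<exists>C'. cd_ctx C C'"
proof (induction C arbitrary: n)
  case Hole then show ?case using cd_ctx_Hole by blast
next
  case (CLam C)
  from CLam.prems(1) obtain n' where "spine n' C" by (auto elim: spine.cases)
  with CLam.IH CLam.prems(2) obtain C' where "cd_ctx C C'" by fastforce
  then show ?case using cd_ctx_CLam by blast
next
  case (CAppL C e)
  from CAppL.prems(1) have "spine (Suc n) C" by (auto elim: spine.cases)
  with CAppL.IH CAppL.prems(2) obtain C' where "cd_ctx C C'" by fastforce
  moreover from CAppL.prems(2) obtain e' where "cd 0 e e'" by fastforce
  ultimately show ?case using cd_ctx_CAppL by blast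
next
  case (CAppR t C) then show ?case by (auto elim: spine.cases)
qed

lemma cd_exists: "\<exists>t'. cd K t t'"
proof (induction "size t" arbitrary: t K rule: less_induct)
  case less
  show ?case
  proof (cases t)
    case (Var i) then show ?thesis using cd_Var by blast
  next
    case (Lam b)
    with less.hyps[of b "K - 1"] obtain b' where "cd (K - 1) b b'" by auto
    then show ?thesis using Lam cd_Lam by blast
  next
    case (App f e)
    show ?thesis
    proof (cases "is_redex K t")
      case True
      then obtain A1 N A2 b
        where R: "ans A1" "ans A2" "needs K 0 N 0" "t = App (plug A1 (Lam N)) (plug A2 (Lam b))"
        unfolding is_redex_def by blast
      have s1: "size (plug A1 (Lam N)) < size t" and s2: "size (plug A2 (Lam b)) < size t"
        using R(4) by auto
      have sN: "size N < size t" using s1 size_plug[of "Lam N" A1] by simp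
      have sb: "size b < size t" using s2 size_plug[of "Lam b" A2] by simp
      obtain A1' where "cd_ctx A1 A1'"
        using cd_ctx_exists[OF ans_spine[OF R(1)], of "Lam N"] less.hyps s1 by fastforce
      moreover obtain A2' where "cd_ctx A2 A2'"
        using cd_ctx_exists[OF ans_spine[OF R(2)], of "Lam b"] less.hyps s2 by fastforce
      moreover obtain N' where "cd K N N'" using less.hyps[OF sN] by blast
      moreover obtain b' where "cd 0 b b'" using less.hyps[OF sb] by blast
      ultimately show ?thesis using R cd_redex by blast
    next
      case False
      have "size f < size t" "size e < size t" using App by auto
      with less.hyps obtain f' e' where "cd (Suc K) f f'" "cd 0 e e'" by blast
      then show ?thesis using False App cd_App by blast
    qed
  qed
qed

lemma par_cd_triangle:
  "cd K t t'' \<Longrightarrow> par K t t' \<Longrightarrow> par K t' t''"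
  "cd_ctx C C'' \<Longrightarrow> par_ctx C C' \<Longrightarrow> par_ctx C' C''"
proof (induction arbitrary: t' and C' rule: cd_cd_ctx.inducts)
  case (cd_Var K i)
  then have "t' = Var i" by (rule par_VarE)
  then show ?case by (simp add: par_Var)
next
  case (cd_Lam K b b')
  then show ?case using par_LamE by (blast intro: par_Lam)
next
  case (cd_App K f e f'' e'')
  from par_AppE[OF cd_App.prems] cd_App.hyps(1) obtain f' e'
    where "t' = App f' e'" "par (Suc K) f f'" "par 0 e e'"
    unfolding is_redex_def by blast
  with cd_App.IH show ?case by (auto intro: par_App)
next
  case (cd_redex A1 A2 K N A1'' N'' A2'' b b'')
  from par_AppE[OF cd_redex.prems] show ?case
  proof (elim disjE exE conjE)
    fix f' e' assume t': "t' = App f' e'"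
      and f': "par (Suc K) (plug A1 (Lam N)) f'" and e': "par 0 (plug A2 (Lam b)) e'"
    obtain A1' N' where A1': "f' = plug A1' (Lam N')" "par_ctx A1 A1'" "par K N N'"
      using par_answer_inv[OF cd_redex.hyps(1) f'] cd_redex.hyps(3) by fastforce
    obtain A2' b' where A2': "e' = plug A2' (Lam b')" "par_ctx A2 A2'" "par 0 b b'"
      using par_answer_inv[OF cd_redex.hyps(2) e'] by auto
    have "ans A1'" "ans A2'" using par_ctx_ans cd_redex.hyps(1,2) A1'(2) A2'(2) by auto
    moreover have "needs K 0 N' 0" using par_needs[OF A1'(3) cd_redex.hyps(3)] .
    ultimately show ?thesis using t' A1' A2' cd_redex.IH by (auto intro: par_redex)
  next
    fix B1 B2 N' b' A1' A2' N1 b1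
    assume B: "ans B1" "ans B2"
        "plug A1 (Lam N) = plug B1 (Lam N')" "plug A2 (Lam b) = plug B2 (Lam b')"
      and par: "par_ctx B1 A1'" "par K N' N1" "par_ctx B2 A2'" "par 0 b' b1"
      and t': "t' = contract A1' A2' N1 b1"
    have "B1 = A1" "N' = N" "B2 = A2" "b' = b"
      using spine_plug_inj[OF ans_spine[OF B(1)] ans_spine[OF cd_redex.hyps(1)]]
            spine_plug_inj[OF ans_spine[OF B(2)] ans_spine[OF cd_redex.hyps(2)]] B(3,4) by metis+
    moreover have "ans A1'" "ans A2'" using par_ctx_ans B par by auto
    ultimately show ?thesis using t' par cd_redex.IH by (auto intro: contract_par)
  qed
next
  case cd_ctx_Hole
  then show ?case by (cases rule: par_ctx.cases) (auto intro: par_ctx_Hole)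
next
  case (cd_ctx_CLam C C'')
  from cd_ctx_CLam.prems show ?case
    by (cases rule: par_ctx.cases) (auto intro: par_ctx_CLam cd_ctx_CLam.IH)
next
  case (cd_ctx_CAppL C C'' e e'')
  from cd_ctx_CAppL.prems show ?case
    by (cases rule: par_ctx.cases) (auto intro: par_ctx_CAppL cd_ctx_CAppL.IH)
qed

lemma par_diamond: "par 0 t t1 \<Longrightarrow> par 0 t t2 \<Longrightarrow> \<exists>t3. par 0 t1 t3 \<and> par 0 t2 t3"
  using cd_exists[of 0 t] par_cd_triangle(1) by blast

lemma mstep_eq_par_star: "mstep = (par 0)\<^sup>*\<^sup>*"
  unfolding mstep_def
proof (rule rtranclp_subset[symmetric])
  show "step \<le> par 0" using step_par by blast
  show "par 0 \<le> step\<^sup>*\<^sup>*" using par_steps(1)[of 0 _ _ Hole] by auto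
qed

theorem lemma1:
  assumes "mstep e e1" and "mstep e e2"
  shows "\<exists>e'. mstep e1 e' \<and> mstep e2 e'"
proof -
  have "confluentp (par 0)"
    by (rule strong_confluentp_imp_confluentp, rule strong_confluentpI) (use par_diamond in blast)
  then show ?thesis using assms unfolding mstep_eq_par_star by (rule confluentpD)
qed

end
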